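(* Let $\Sigma$ be a signature all of whose declarations are on standard form, over an unrestricted variable system, and write $\vdash\mathcal U$ for $\mathcal U\in\mathcal{J}(\Sigma)$. Let $y$ be a variable not in $\mathrm{V}(\Theta,A,a)$. (a) If $\vdash\Gamma,y:B,\Theta$ context, then $\vdash\Gamma,\Theta$ context. (b) If $\vdash A$ type $(\Gamma,y:B,\Theta)$, then $\vdash A$ type $(\Gamma,\Theta)$. (c) If $\vdash a:A\ (\Gamma,y:B,\Theta)$, then $\vdash a:A\ (\Gamma,\Theta)$.
   Context: Fix an infinite set $V$ of variables with decidable equality, and a fresh variable provider: functions $\varphi,\mathsf{fr}$ assigning to each finite $X\subseteq V$ an inhabited subset $\varphi(X)\subseteq V\setminus X$ and an element $\mathsf{fr}(X)\in\varphi(X)$. The variable system is unrestricted if $\varphi(X)=V\setminus X$ for all finite $X$. Fix disjoint sets $F$ (function symbols) and $T$ (type symbols) with decidable equality. Preelements are terms built from variables and symbols of $F$; a pretype is $S(t_1,\ldots,t_n)$ with $S\in T$ and $t_i$ preelements. $\mathrm{V}(E)$ is the set of variables of an expression $E$, $\equiv$ is syntactic identity, and $E[\bar a/\bar x]$ is simultaneous substitution. A precontext is a sequence $\Gamma=x_1:A_1,\ldots,x_n:A_n$ of pretypes with $x_k\in\varphi(\{x_1,\ldots,x_{k-1}\})$ and $\mathrm{V}(A_k)\subseteq\{x_1,\ldots,x_{k-1}\}$; $\mathrm{OV}(\Gamma)=x_1,\ldots,x_n$, $\mathrm{V}(\Gamma)=\{x_1,\ldots,x_n\}$, $\mathrm{Fresh}(\Gamma)=\varphi(\mathrm{V}(\Gamma))$,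 $\mathrm{fresh}(\Gamma)=\mathsf{fr}(\mathrm{V}(\Gamma))$, $E[\bar a/\Gamma]=E[\bar a/x_1,\ldots,x_n]$. Top variables: $\mathrm{TV}(\langle\rangle)=\emptyset$, $\mathrm{TV}(\Gamma,x:A)=(\mathrm{TV}(\Gamma)\setminus\mathrm{V}(A))\cup\{x\}$. A determining sequence for $\Gamma$ is a strictly increasing $\bar i=i_1,\ldots,i_k$ in $\{1,\ldots,n\}$ with $\mathrm{TV}(\Gamma)\subseteq\{x_{i_1},\ldots,x_{i_k}\}$; for $\bar a=a_1,\ldots,a_n$ put $\bar a_{\bar i}=a_{i_1},\ldots,a_{i_k}$. A type predeclaration is $(\Gamma,S,\bar i)$ with $S\in T$, $\bar i$ determining; a function predeclaration is $(\Gamma,f,\bar i,U)$ with $f\in F$, $\bar i$ determining, $U$ a pretype with $\mathrm{V}(U)\subseteq\mathrm{V}(\Gamma)$. A declaration is on standard form if $\bar i=1,2,\ldots,n$ where $n$ is the length of $\Gamma$. A presignature is a set $\Sigma$ of predeclarations with no symbol declared twice. Judgements are "$\Gamma$ context", "$A$ type $(\Gamma)$", "$a:A\ (\Gamma)$". $\mathcal{J}(\Sigma)$ is the smallest set of judgements closed under: (R1) $\langle\rangle$ context; (R2) from $\Gamma$ context and $A$ type $(\Gamma)$ infer $\Gamma,x:A$ context, for $x\in\mathrm{Fresh}(\Gamma)$; (R3) from $x_1:A_1,\ldots,x_n:A_n$ context infer $x_i:A_i\ (x_1:A_1,\ldots,x_n:A_n)$; (R4) if $(\Gamma,S,\bar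 i)\in\Sigma$ and $\bar a:\Delta\to\Gamma$, infer $S(\bar a_{\bar i})$ type $(\Delta)$; (R5) if $(\Gamma,f,\bar i,U)\in\Sigma$, $\bar a:\Delta\to\Gamma$ and $U[\bar a/\Gamma]$ type $(\Delta)$, infer $f(\bar a_{\bar i}):U[\bar a/\Gamma]\ (\Delta)$. Here, for $\Gamma=x_1:A_1,\ldots,x_n:A_n$, the context map "$\bar a:\Delta\to\Gamma$" abbreviates the $n+2$ judgements $\Delta$ context, $\Gamma$ context, and $a_k:A_k[a_1,\ldots,a_{k-1}/x_1,\ldots,x_{k-1}]\ (\Delta)$ for $k=1,\ldots,n$. $\Sigma$ is a signature if ($\Gamma$ context)$\in\mathcal{J}(\Sigma)$ whenever $(\Gamma,S,\bar i)\in\Sigma$, and ($U$ type $(\Gamma)$)$\in\mathcal{J}(\Sigma)$ whenever $(\Gamma,f,\bar i,U)\in\Sigma$. *)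

theory Defs
  imports Main
begin

text \<open>Variables: type 'v; function symbols F: type 'f; type symbols T: type 't
  (separate types, hence disjoint; equality is decidable in HOL).\<close>

datatype ('v,'f) ptm = Var 'v | App 'f "('v,'f) ptm list"

datatype ('v,'f,'t) pty = Ty 't "('v,'f) ptm list"

type_synonym ('v,'f,'t) pctx = "('v \<times> ('v,'f,'t) pty) list"

fun tmvars :: "('v,'f) ptm \<Rightarrow> 'v set" where
  "tmvars (Var x) = {x}"
| "tmvars (App f ts) = (\<Union>t\<in>set ts. tmvars t)"

fun tyvars :: "('v,'f,'t) pty \<Rightarrow> 'v set" where
  "tyvars (Ty S ts) = (\<Union>t\<in>set ts. tmvars t)"

definition cvars :: "('v,'f,'t) pctx \<Rightarrow> 'v set" where
  "cvars G = fst ` set G"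

definition allvars :: "('v,'f,'t) pctx \<Rightarrow> 'v set" where
  "allvars G = cvars G \<union> (\<Union>p\<in>set G. tyvars (snd p))"

fun tmsubst :: "('v \<Rightarrow> ('v,'f) ptm) \<Rightarrow> ('v,'f) ptm \<Rightarrow> ('v,'f) ptm" where
  "tmsubst s (Var x) = s x"
| "tmsubst s (App f ts) = App f (map (tmsubst s) ts)"

fun tysubst :: "('v \<Rightarrow> ('v,'f) ptm) \<Rightarrow> ('v,'f,'t) pty \<Rightarrow> ('v,'f,'t) pty" where
  "tysubst s (Ty S ts) = Ty S (map (tmsubst s) ts)"

definition sub_of :: "'v list \<Rightarrow> ('v,'f) ptm list \<Rightarrow> 'v \<Rightarrow> ('v,'f) ptm" where
  "sub_of xs as x = (case map_of (zip xs as) x of Some a \<Rightarrow> a | None \<Rightarrow> Var x)"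

definition unrestricted :: "('v set \<Rightarrow> 'v set) \<Rightarrow> bool" where
  "unrestricted phi \<longleftrightarrow> (\<forall>X. finite X \<longrightarrow> phi X = UNIV - X)"

definition precontext :: "('v set \<Rightarrow> 'v set) \<Rightarrow> ('v,'f,'t) pctx \<Rightarrow> bool" where
  "precontext phi G \<longleftrightarrow> (\<forall>k<length G.
      fst (G!k) \<in> phi (cvars (take k G)) \<and> tyvars (snd (G!k)) \<subseteq> cvars (take k G))"

definition topvars :: "('v,'f,'t) pctx \<Rightarrow> 'v set" where
  "topvars G = foldl (\<lambda>S p. (S - tyvars (snd p)) \<union> {fst p}) {} G"

text \<open>Index sequences are 1-based as in the paper.\<close>
definition determining :: "('v,'f,'t) pctx \<Rightarrow> nat list \<Rightarrow> bool" where
  "determining G is \<longleftrightarrow> sorted_wrt (<) is \<and> set is \<subseteq> {1..length G}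
     \<and> topvars G \<subseteq> {fst (G ! (i - 1)) | i. i \<in> set is}"

definition select :: "'a list \<Rightarrow> nat list \<Rightarrow> 'a list" where
  "select as is = map (\<lambda>i. as ! (i - 1)) is"

datatype ('v,'f,'t) decl =
    TDecl "('v,'f,'t) pctx" 't "nat list"
  | FDecl "('v,'f,'t) pctx" 'f "nat list" "('v,'f,'t) pty"

fun declsym :: "('v,'f,'t) decl \<Rightarrow> 'f + 't" where
  "declsym (TDecl G S is) = Inr S"
| "declsym (FDecl G f is U) = Inl f"

fun predecl :: "('v set \<Rightarrow> 'v set) \<Rightarrow> ('v,'f,'t) decl \<Rightarrow> bool" where
  "predecl phi (TDecl G S is) \<longleftrightarrow> precontext phi G \<and> determining G is"
| "predecl phi (FDecl G f is U) \<longleftrightarrow> precontext phi G \<and> determining G is \<and> tyvars U \<subseteq> cvars G"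

fun standard_form :: "('v,'f,'t) decl \<Rightarrow> bool" where
  "standard_form (TDecl G S is) \<longleftrightarrow> is = [1..<length G + 1]"
| "standard_form (FDecl G f is U) \<longleftrightarrow> is = [1..<length G + 1]"

definition presignature :: "('v set \<Rightarrow> 'v set) \<Rightarrow> ('v,'f,'t) decl set \<Rightarrow> bool" where
  "presignature phi Sg \<longleftrightarrow> (\<forall>d\<in>Sg. predecl phi d)
     \<and> (\<forall>d1\<in>Sg. \<forall>d2\<in>Sg. declsym d1 = declsym d2 \<longrightarrow> d1 = d2)"

datatype ('v,'f,'t) judg =
    JCtx "('v,'f,'t) pctx"
  | JTy "('v,'f,'t) pctx" "('v,'f,'t) pty"
  | JEl "('v,'f,'t) pctx" "('v,'f) ptm" "('v,'f,'t) pty"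

text \<open>The context map "as : D -> G" is written out inline in R4 and R5.\<close>
inductive derivable :: "('v set \<Rightarrow> 'v set) \<Rightarrow> ('v,'f,'t) decl set \<Rightarrow> ('v,'f,'t) judg \<Rightarrow> bool"
  for phi Sg where
  R1: "derivable phi Sg (JCtx [])"
| R2: "derivable phi Sg (JCtx G) \<Longrightarrow> derivable phi Sg (JTy G A) \<Longrightarrow> x \<in> phi (cvars G)
       \<Longrightarrow> derivable phi Sg (JCtx (G @ [(x, A)]))"
| R3: "derivable phi Sg (JCtx G) \<Longrightarrow> i < length G
       \<Longrightarrow> derivable phi Sg (JEl G (Var (fst (G ! i))) (snd (G ! i)))"
| R4: "TDecl G S is \<in> Sg \<Longrightarrow> derivable phi Sg (JCtx D) \<Longrightarrow> derivable phi Sg (JCtx G)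
       \<Longrightarrow> length as = length G
       \<Longrightarrow> (\<forall>k<length G. derivable phi Sg
             (JEl D (as ! k) (tysubst (sub_of (take k (map fst G)) (take k as)) (snd (G ! k)))))
       \<Longrightarrow> derivable phi Sg (JTy D (Ty S (select as is)))"
| R5: "FDecl G f is U \<in> Sg \<Longrightarrow> derivable phi Sg (JCtx D) \<Longrightarrow> derivable phi Sg (JCtx G)
       \<Longrightarrow> length as = length G
       \<Longrightarrow> (\<forall>k<length G. derivable phi Sg
             (JEl D (as ! k) (tysubst (sub_of (take k (map fst G)) (take k as)) (snd (G ! k)))))
       \<Longrightarrow> derivable phi Sg (JTy D (tysubst (sub_of (map fst G) as) U))
       \<Longrightarrow> derivable phi Sg (JEl D (App f (select as is)) (tysubst (sub_of (map fst G) as) U))"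

fun decl_ok :: "('v set \<Rightarrow> 'v set) \<Rightarrow> ('v,'f,'t) decl set \<Rightarrow> ('v,'f,'t) decl \<Rightarrow> bool" where
  "decl_ok phi Sg (TDecl G S is) \<longleftrightarrow> derivable phi Sg (JCtx G)"
| "decl_ok phi Sg (FDecl G f is U) \<longleftrightarrow> derivable phi Sg (JTy G U)"

definition signature :: "('v set \<Rightarrow> 'v set) \<Rightarrow> ('v,'f,'t) decl set \<Rightarrow> bool" where
  "signature phi Sg \<longleftrightarrow> presignature phi Sg \<and> (\<forall>d\<in>Sg. decl_ok phi Sg d)"

end

theory Submission
  imports Defs
begin

text \<open>In R4 and R5 the declaration is on standard form, so every
  argument of the context map appears in the conclusion; hence \<open>y\<close> occurs in none of them,
  nor in the types they are checked against, and the premises strengthen by induction. The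
  freshness side condition of R2 survives because an unrestricted variable system only asks a
  new variable to avoid the declared ones, of which there are now fewer.\<close>

fun judg_ctx :: "('v,'f,'t) judg \<Rightarrow> ('v,'f,'t) pctx" where
  "judg_ctx (JCtx C) = C"
| "judg_ctx (JTy C A) = C"
| "judg_ctx (JEl C a A) = C"

fun judg_vars :: "('v,'f,'t) judg \<Rightarrow> 'v set" where
  "judg_vars (JCtx C) = {}"
| "judg_vars (JTy C A) = tyvars A"
| "judg_vars (JEl C a A) = tyvars A \<union> tmvars a"

fun judg_in_ctx :: "('v,'f,'t) pctx \<Rightarrow> ('v,'f,'t) judg \<Rightarrow> ('v,'f,'t) judg" where
  "judg_in_ctx D (JCtx C) = JCtx D"
| "judg_in_ctx D (JTy C A) = JTy D A"
| "judg_in_ctx D (JEl C a A) = JEl D a A"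

lemma tmvars_tmsubst: "tmvars (tmsubst s t) = (\<Union>x\<in>tmvars t. tmvars (s x))"
  by (induction t) auto

lemma tyvars_tysubst: "tyvars (tysubst s A) = (\<Union>x\<in>tyvars A. tmvars (s x))"
  by (cases A) (auto simp: tmvars_tmsubst)

lemma tmvars_sub_of:
  assumes "x \<in> set xs" "length xs = length as"
  shows "tmvars (sub_of xs as x) \<subseteq> (\<Union>a\<in>set as. tmvars a)"
proof -
  obtain b where b: "map_of (zip xs as) x = Some b"
    using map_of_zip_is_Some[OF assms(2)] assms(1) by blast
  then have "b \<in> set as"
    by (blast dest: map_of_SomeD set_zip_rightD)
  then show ?thesis
    using b by (auto simp: sub_of_def)
qed

lemma tyvars_tysubst_sub_of:
  assumes "tyvars A \<subseteq> set xs" "length xs = length as"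
  shows "tyvars (tysubst (sub_of xs as) A) \<subseteq> (\<Union>a\<in>set as. tmvars a)"
  using assms tmvars_sub_of by (fastforce simp: tyvars_tysubst)

lemma select_standard: "select as [1..<length as + 1] = as"
proof -
  have "[1..<length as + 1] = map Suc [0..<length as]"
    by (simp add: map_Suc_upt)
  then show ?thesis
    by (simp add: select_def comp_def map_nth)
qed

lemma allvars_append: "allvars (G @ H) = allvars G \<union> allvars H"
  by (auto simp: allvars_def cvars_def)

lemma allvars_singleton: "allvars [(x, A)] = {x} \<union> tyvars A"
  by (auto simp: allvars_def cvars_def)

lemma unrestricted_fresh_antimono:
  assumes "unrestricted phi" "x \<in> phi (cvars G)" "cvars H \<subseteq> cvars G"
  shows "x \<in> phi (cvars H)"
proof -
  have phi: "\<And>G. phi (cvars G) = UNIV - cvars G"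
    using assms(1) by (simp add: unrestricted_def cvars_def)
  then have "x \<notin> cvars H"
    using assms(2,3) by auto
  then show ?thesis
    by (simp add: phi)
qed

lemma nth_remove_entry:
  assumes "i < length (G @ [p] @ Th)" "(G @ [p] @ Th) ! i \<noteq> p"
  obtains j where "j < length (G @ Th)" "(G @ [p] @ Th) ! i = (G @ Th) ! j"
proof (cases "i < length G")
  case True
  then show ?thesis
    by (intro that[of i]) (auto simp: nth_append)
next
  case False
  with assms have "i > length G"
    by (cases "i = length G") (auto simp: nth_append)
  with assms(1) show ?thesis
    by (intro that[of "i - 1"]) (auto simp: nth_append)
qed

lemma context_map_vars:
  assumes "precontext phi G" "length as = length G" "k < length G"
  shows "tmvars (as ! k) \<union> tyvars (tysubst (sub_of (take k (map fst G)) (take k as)) (snd (G ! k)))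
           \<subseteq> (\<Union>a\<in>set as. tmvars a)"
proof -
  have "tyvars (snd (G ! k)) \<subseteq> set (take k (map fst G))"
    using assms(1,3) by (simp add: precontext_def cvars_def take_map)
  then have "tyvars (tysubst (sub_of (take k (map fst G)) (take k as)) (snd (G ! k)))
               \<subseteq> (\<Union>a\<in>set (take k as). tmvars a)"
    by (rule tyvars_tysubst_sub_of) (simp add: assms(2))
  moreover have "as ! k \<in> set as"
    using assms(2,3) by simp
  ultimately show ?thesis
    using set_take_subset[of k as] by blast
qed

lemma derivable_strengthening:
  assumes "derivable phi Sg J" "unrestricted phi" "presignature phi Sg"
    "\<forall>d\<in>Sg. standard_form d"
    "judg_ctx J = G @ [(y, B)] @ Th" "y \<notin> allvars Th \<union> judg_vars J"
  shows "derivable phi Sg (judg_in_ctx (G @ Th) J)"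
  using assms(1,5,6)
proof (induction arbitrary: G Th rule: derivable.induct)
  case R1
  then show ?case by simp
next
  case (R2 C A x)
  show ?case
  proof (cases Th rule: rev_cases)
    case Nil
    then show ?thesis using R2 by simp
  next
    case (snoc Th' p)
    then have C: "C = G @ [(y, B)] @ Th'" and p: "p = (x, A)"
      using R2.prems(1) by auto
    have y: "y \<notin> allvars Th'" "y \<notin> tyvars A"
      using R2.prems(2) by (simp_all add: snoc p allvars_append allvars_singleton)
    have "derivable phi Sg (JCtx (G @ Th'))" "derivable phi Sg (JTy (G @ Th') A)"
      using R2.IH C y by simp_all
    moreover have "x \<in> phi (cvars (G @ Th'))"
      by (rule unrestricted_fresh_antimono[OF assms(2) R2.hyps(3)]) (auto simp: C cvars_def)
    ultimately have "derivable phi Sg (JCtx ((G @ Th') @ [(x, A)]))"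
      by (rule derivable.R2)
    then show ?thesis
      by (simp add: snoc p)
  qed
next
  case (R3 C i)
  have C: "C = G @ [(y, B)] @ Th"
    using R3.prems(1) by simp
  have "fst (C ! i) \<noteq> y"
    using R3.prems(2) by auto
  then have "C ! i \<noteq> (y, B)"
    by auto
  then obtain j where j: "j < length (G @ Th)" "C ! i = (G @ Th) ! j"
    using nth_remove_entry[of i G "(y, B)" Th] R3.hyps(2) unfolding C by blast
  have "derivable phi Sg (JCtx (G @ Th))"
    using R3 by simp
  from derivable.R3[OF this j(1)] show ?case
    by (simp add: j(2))
next
  case (R4 G0 S "is" D as)
  have "predecl phi (TDecl G0 S is)" "standard_form (TDecl G0 S is)"
    using assms(3,4) R4.hyps(1) unfolding presignature_def by blast+
  then have G0: "precontext phi G0" and sel: "select as is = as"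
    using R4.hyps(4) select_standard[of as] by auto
  have "\<forall>k<length G0. derivable phi Sg (JEl (G @ Th) (as ! k)
      (tysubst (sub_of (take k (map fst G0)) (take k as)) (snd (G0 ! k))))"
  proof (intro allI impI)
    fix k
    assume k: "k < length G0"
    have "y \<notin> tmvars (as ! k) \<union>
        tyvars (tysubst (sub_of (take k (map fst G0)) (take k as)) (snd (G0 ! k)))"
      using context_map_vars[OF G0 R4.hyps(4) k] R4.prems(2) by (auto simp: sel)
    then show "derivable phi Sg (JEl (G @ Th) (as ! k)
        (tysubst (sub_of (take k (map fst G0)) (take k as)) (snd (G0 ! k))))"
      using R4.IH(3) k R4.prems(1,2) by simp
  qed
  moreover have "derivable phi Sg (JCtx (G @ Th))"
    using R4 by simp
  ultimately show ?case
    using derivable.R4[OF R4.hyps(1) _ R4.hyps(3,4)] by simp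
next
  case (R5 G0 f "is" U D as)
  have "predecl phi (FDecl G0 f is U)" "standard_form (FDecl G0 f is U)"
    using assms(3,4) R5.hyps(1) unfolding presignature_def by blast+
  then have G0: "precontext phi G0" and sel: "select as is = as"
    using R5.hyps(4) select_standard[of as] by auto
  have "\<forall>k<length G0. derivable phi Sg (JEl (G @ Th) (as ! k)
      (tysubst (sub_of (take k (map fst G0)) (take k as)) (snd (G0 ! k))))"
  proof (intro allI impI)
    fix k
    assume k: "k < length G0"
    have "y \<notin> tmvars (as ! k) \<union>
        tyvars (tysubst (sub_of (take k (map fst G0)) (take k as)) (snd (G0 ! k)))"
      using context_map_vars[OF G0 R5.hyps(4) k] R5.prems(2) by (auto simp: sel)
    then show "derivable phi Sg (JEl (G @ Th) (as ! k)
        (tysubst (sub_of (take k (map fst G0)) (take k as)) (snd (G0 ! k))))"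
      using R5.IH(3) k R5.prems(1,2) by simp
  qed
  moreover have "derivable phi Sg (JCtx (G @ Th))"
    "derivable phi Sg (JTy (G @ Th) (tysubst (sub_of (map fst G0) as) U))"
    using R5 by (simp_all add: sel)
  ultimately show ?case
    using derivable.R5[OF R5.hyps(1) _ R5.hyps(3,4)] by (simp add: sel)
qed

theorem mainTheorem4:
  fixes phi :: "'v set \<Rightarrow> 'v set"
    and Sg :: "('v,'f,'t) decl set"
    and y :: 'v and G Th :: "('v,'f,'t) pctx" and B A :: "('v,'f,'t) pty" and a :: "('v,'f) ptm"
  assumes "infinite (UNIV :: 'v set)"
    and "unrestricted phi"
    and "signature phi Sg"
    and "\<forall>d\<in>Sg. standard_form d"
  shows "(y \<notin> allvars Th \<longrightarrow>
            derivable phi Sg (JCtx (G @ [(y, B)] @ Th)) \<longrightarrow> derivable phi Sg (JCtx (G @ Th)))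
       \<and> (y \<notin> allvars Th \<union> tyvars A \<longrightarrow>
            derivable phi Sg (JTy (G @ [(y, B)] @ Th) A) \<longrightarrow> derivable phi Sg (JTy (G @ Th) A))
       \<and> (y \<notin> allvars Th \<union> tyvars A \<union> tmvars a \<longrightarrow>
            derivable phi Sg (JEl (G @ [(y, B)] @ Th) a A) \<longrightarrow> derivable phi Sg (JEl (G @ Th) a A))"
proof -
  have "presignature phi Sg"
    using assms(3) by (simp add: signature_def)
  note strengthen = derivable_strengthening[OF _ assms(2) this assms(4)]
  show ?thesis
    using strengthen[of "JCtx _"] strengthen[of "JTy _ A"] strengthen[of "JEl _ a A"] by auto
qed

end
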